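(* For all integers $0\le k\le n$, \[ B^{\mathrm{fmaj}}_{n,n-k}(q)=\sum_{\ell=0}^{k}q^{(n-k)(2\ell-n-k)}\,B_{n,n-\ell}(q)\,{n-\ell\brack k-\ell}_{q^2}. \]
   Context: $\mathcal{B}_n$ is the group of signed permutations of $[n]$ (bijections $\pi$ of $\{\pm1,\dots,\pm n\}$ with $\pi(-i)=-\pi(i)$, written $\pi=\pi_1\cdots\pi_n$), integers ordered naturally. Set $\pi_0=0$; $\mathrm{Des}_B(\pi)=\{i\in\{0,\dots,n-1\}:\pi_i>\pi_{i+1}\}$, $\mathrm{des}_B(\pi)=|\mathrm{Des}_B(\pi)|$, $\mathrm{neg}(\pi)=|\{i\in[n]:\pi_i<0\}|$, $\mathrm{fmaj}(\pi)=\sum_{i\in\mathrm{Des}_B(\pi)}2i+\mathrm{neg}(\pi)$; $B_{n,k}(q)$ is defined by $\sum_{\pi\in\mathcal{B}_n}t^{\mathrm{des}_B(\pi)}q^{\mathrm{fmaj}(\pi)}=\sum_kB_{n,k}(q)t^k$. For $0\le k\le n$ let $\mathcal{B}^{>}_{n,k}=\{(\pi,S):\pi\in\mathcal{B}_n,\ S\subseteq\mathrm{Des}_B(\pi),\ |S|=k\}$ (descent-starred signed permutations; elements of $S$ are the starred descents). For $(\pi,S)\in\mathcal{B}^{>}_{n,k}$ define $\mathrm{fmaj}((\pi,S))=\mathrm{fmaj}(\pi)-\sum_{j\in S}\bigl(2|\mathrm{Des}_B(\pi)\cap\{j,\dots,n-1\}|-1\bigr)$, and $B^{\mathrm{fmaj}}_{n,k}(q)=\sum_{(\pi,S)\in\mathcal{B}^{>}_{n,k}}q^{\mathrm{fmaj}((\pi,S))}$.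 $[k]_q=1+\dots+q^{k-1}$, $[n]_q!=\prod_{i=1}^n[i]_q$, ${n\brack k}_q=\frac{[n]_q!}{[k]_q![n-k]_q!}$, and the subscript $q^2$ means $q$ is replaced by $q^2$. *)

theory Defs
  imports Complex_Main
begin

text \<open>A signed permutation pi = pi_1 ... pi_n of [n] is encoded as a function
  pi :: nat => int with pi i the i-th letter for 1 <= i <= n, and pi i = 0 otherwise
  (in particular pi 0 = 0, matching the convention pi_0 = 0). The condition
  pi(-i) = -pi(i) is built into this one-line notation; the requirement is that
  i |-> |pi i| is a bijection of {1..n}.\<close>

definition signed_perms :: "nat \<Rightarrow> (nat \<Rightarrow> int) set" where
  "signed_perms n = {p. (\<forall>i. i \<notin> {1..n} \<longrightarrow> p i = 0) \<and>
                        bij_betw (\<lambda>i. nat \<bar>p i\<bar>) {1..n} {1..n}}"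

definition DesB :: "nat \<Rightarrow> (nat \<Rightarrow> int) \<Rightarrow> nat set" where
  "DesB n p = {i \<in> {0..<n}. p i > p (Suc i)}"

definition desB :: "nat \<Rightarrow> (nat \<Rightarrow> int) \<Rightarrow> nat" where
  "desB n p = card (DesB n p)"

definition negB :: "nat \<Rightarrow> (nat \<Rightarrow> int) \<Rightarrow> nat" where
  "negB n p = card {i \<in> {1..n}. p i < 0}"

definition fmaj :: "nat \<Rightarrow> (nat \<Rightarrow> int) \<Rightarrow> nat" where
  "fmaj n p = (\<Sum>i\<in>DesB n p. 2 * i) + negB n p"

definition Bpoly :: "nat \<Rightarrow> nat \<Rightarrow> real \<Rightarrow> real" where
  "Bpoly n k q = (\<Sum>p\<in>{p \<in> signed_perms n. desB n p = k}. q ^ fmaj n p)"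

definition starred :: "nat \<Rightarrow> nat \<Rightarrow> ((nat \<Rightarrow> int) \<times> nat set) set" where
  "starred n k = {(p, S). p \<in> signed_perms n \<and> S \<subseteq> DesB n p \<and> card S = k}"

definition fmaj_star :: "nat \<Rightarrow> (nat \<Rightarrow> int) \<Rightarrow> nat set \<Rightarrow> int" where
  "fmaj_star n p S = int (fmaj n p)
     - (\<Sum>j\<in>S. 2 * int (card (DesB n p \<inter> {j..n - 1})) - 1)"

definition Bfmaj :: "nat \<Rightarrow> nat \<Rightarrow> real \<Rightarrow> real" where
  "Bfmaj n k q = (\<Sum>(p, S)\<in>starred n k. q powi fmaj_star n p S)"

definition qint :: "nat \<Rightarrow> real \<Rightarrow> real" where
  "qint k q = (\<Sum>i<k. q ^ i)"

definition qfact :: "nat \<Rightarrow> real \<Rightarrow> real" where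
  "qfact n q = (\<Prod>i=1..n. qint i q)"

definition qbinom :: "nat \<Rightarrow> nat \<Rightarrow> real \<Rightarrow> real" where
  "qbinom n k q = qfact n q / (qfact k q * qfact (n - k) q)"

end

theory Submission
  imports Defs
begin

text \<open>Fix a signed permutation with \<open>d\<close> descents. If a starred descent is the \<open>r\<close>-th descent
  counted from the right, starring it lowers \<open>fmaj\<close> by \<open>2r - 1\<close>, and \<open>r\<close> runs bijectively over
  \<open>{1..d}\<close>. Hence summing over all \<open>m\<close>-element sets of starred descents multiplies \<open>q^fmaj\<close> by
  the elementary symmetric function \<open>e_m(q^-1, q^-3, \<dots>, q^(1-2d))\<close>, which by the
  \<open>q\<close>-Pascal recurrence equals \<open>q^(m(m-2d))\<close> times the \<open>q\<^sup>2\<close>-binomial \<open>[d, m]\<close>. Grouping the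
  signed permutations by their number of descents \<open>d = n - l\<close> gives the formula.\<close>

lemma qint_add: "qint (a + b) x = qint a x + x ^ a * qint b x"
  by (induction b) (simp_all add: qint_def power_add algebra_simps)

lemma qint_pos: "x > 0 \<Longrightarrow> i \<ge> 1 \<Longrightarrow> qint i x > 0"
  unfolding qint_def by (intro sum_pos) (auto simp: lessThan_empty_iff)

lemma qfact_0 [simp]: "qfact 0 x = 1"
  by (simp add: qfact_def)

lemma qfact_Suc: "qfact (Suc n) x = qfact n x * qint (Suc n) x"
  by (simp add: qfact_def prod.cl_ivl_Suc)

lemma qfact_pos: "x > 0 \<Longrightarrow> qfact n x > 0"
  by (induction n) (auto simp: qfact_Suc qint_pos)

lemma qbinom_0_right: "x > 0 \<Longrightarrow> qbinom d 0 x = 1"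
  using qfact_pos[of x d] by (simp add: qbinom_def)

lemma qbinom_self: "x > 0 \<Longrightarrow> qbinom d d x = 1"
  using qfact_pos[of x d] by (simp add: qbinom_def)

lemma qbinom_symmetric: "m \<le> d \<Longrightarrow> qbinom d (d - m) x = qbinom d m x"
  by (simp add: qbinom_def mult.commute)

lemma qbinom_Suc_Suc:
  assumes "x > 0" and "m < d"
  shows "qbinom (Suc d) (Suc m) x = x ^ Suc m * qbinom d (Suc m) x + qbinom d m x"
proof -
  obtain e where d: "d = m + Suc e"
    using \<open>m < d\<close> by (metis less_imp_Suc_add add_Suc_right)
  then have diffs: "Suc d - Suc m = Suc e" "d - Suc m = e" "d - m = Suc e"
    by auto
  have "qfact m x > 0" "qfact e x > 0" "qfact d x > 0" "qint (Suc m) x > 0" "qint (Suc e) x > 0"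
    using qfact_pos qint_pos \<open>x > 0\<close> by auto
  moreover have "qint (Suc d) x = x ^ Suc m * qint (Suc e) x + qint (Suc m) x"
    using qint_add[of "Suc m" "Suc e" x] d by simp
  ultimately show ?thesis
    unfolding qbinom_def diffs qfact_Suc by (simp add: field_simps)
qed

definition esym :: "('a \<Rightarrow> 'b::comm_semiring_1) \<Rightarrow> 'a set \<Rightarrow> nat \<Rightarrow> 'b" where
  "esym w A m = (\<Sum>T\<in>{T. T \<subseteq> A \<and> card T = m}. prod w T)"

lemma finite_subsets_card_eq: "finite A \<Longrightarrow> finite {T. T \<subseteq> A \<and> card T = m}"
  by (simp add: finite_Collect_conjI finite_Collect_subsets)

lemma esym_0_right [simp]:
  assumes "finite A"
  shows "esym w A 0 = 1"
proof -
  have "{T. T \<subseteq> A \<and> card T = 0} = {{}}"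
    using assms by (auto dest: finite_subset)
  then show ?thesis
    by (simp add: esym_def)
qed

lemma esym_eq_0_if_card_less:
  assumes "finite A" and "card A < m"
  shows "esym w A m = 0"
proof -
  have "{T. T \<subseteq> A \<and> card T = m} = {}"
    using \<open>card A < m\<close> by (auto dest!: card_mono[OF \<open>finite A\<close>])
  then show ?thesis
    by (simp only: esym_def sum.empty)
qed

lemma esym_insert_Suc:
  assumes "finite A" and "a \<notin> A"
  shows "esym w (insert a A) (Suc m) = esym w A (Suc m) + w a * esym w A m"
proof -
  let ?K = "\<lambda>j. {T. T \<subseteq> A \<and> card T = j}"
  have split: "{T. T \<subseteq> insert a A \<and> card T = Suc m} = ?K (Suc m) \<union> insert a ` ?K m"
  proof (intro equalityI subsetI)
    fix T
    assume T: "T \<in> {T. T \<subseteq> insert a A \<and> card T = Suc m}"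
    then have "finite T"
      using assms(1) finite_subset by auto
    show "T \<in> ?K (Suc m) \<union> insert a ` ?K m"
    proof (cases "a \<in> T")
      case True
      then have "T = insert a (T - {a})" and "T - {a} \<in> ?K m"
        using T \<open>finite T\<close> by auto
      then show ?thesis
        by blast
    qed (use T in auto)
  next
    fix T
    assume "T \<in> ?K (Suc m) \<union> insert a ` ?K m"
    then show "T \<in> {T. T \<subseteq> insert a A \<and> card T = Suc m}"
      using assms by auto (metis card_insert_disjoint finite_subset subsetD)
  qed
  have disjoint: "?K (Suc m) \<inter> insert a ` ?K m = {}"
    using \<open>a \<notin> A\<close> by auto
  have "(\<Sum>T\<in>insert a ` ?K m. prod w T) = (\<Sum>T\<in>?K m. prod w (insert a T))"
    using \<open>a \<notin> A\<close> by (subst sum.reindex) (auto simp: inj_on_def)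
  also have "\<dots> = (\<Sum>T\<in>?K m. w a * prod w T)"
    using assms by (intro sum.cong refl prod.insert) (auto dest: finite_subset)
  finally show ?thesis
    unfolding esym_def split using assms
    by (simp add: sum.union_disjoint[OF _ _ disjoint] finite_subsets_card_eq sum_distrib_left)
qed

lemma esym_reindex:
  assumes "bij_betw f A B"
  shows "esym (w \<circ> f) A m = esym w B m"
proof -
  have inj: "inj_on f S" if "S \<subseteq> A" for S
    using assms that by (auto simp: bij_betw_def intro: inj_on_subset)
  then have "bij_betw (image f) {S \<in> Pow A. card S = m} {T \<in> Pow B. card T = m}"
    using assms by (intro bij_betw_Collect bij_betw_Pow) (auto simp: card_image)
  then have "bij_betw (image f) {S. S \<subseteq> A \<and> card S = m} {T. T \<subseteq> B \<and> card T = m}"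
    by simp
  then have "esym w B m = (\<Sum>S\<in>{S. S \<subseteq> A \<and> card S = m}. prod w (f ` S))"
    unfolding esym_def by (rule sum.reindex_bij_betw[symmetric])
  also have "\<dots> = esym (w \<circ> f) A m"
    unfolding esym_def using inj by (intro sum.cong refl) (simp add: prod.reindex)
  finally show ?thesis ..
qed

lemma esym_inverse_odd_powers:
  fixes q :: real
  assumes "q \<noteq> 0" and "m \<le> d"
  shows "esym (\<lambda>t. q powi (1 - 2 * int t)) {1..d} m
    = q powi (int m * (int m - 2 * int d)) * qbinom d m (q\<^sup>2)"
  using \<open>m \<le> d\<close>
proof (induction d arbitrary: m)
  case 0
  then show ?case
    by (simp add: qbinom_0_right \<open>q \<noteq> 0\<close>)
next
  case (Suc d)
  let ?w = "\<lambda>t. q powi (1 - 2 * int t)"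
  have x: "q\<^sup>2 > 0"
    using \<open>q \<noteq> 0\<close> by simp
  have insert: "esym ?w {1..Suc d} (Suc j) = esym ?w {1..d} (Suc j) + ?w (Suc d) * esym ?w {1..d} j"
    for j by (simp add: atLeastAtMostSuc_conv esym_insert_Suc)
  have exp: "q powi (a + b) = q powi a * q powi b" for a b
    using \<open>q \<noteq> 0\<close> by (simp add: power_int_add)
  have square_power: "(q\<^sup>2) ^ i = q powi (2 * int i)" for i
    by (simp add: power_int_mult)
  consider "m = 0" | j where "m = Suc j" "j < d" | "m = Suc d"
    using Suc.prems by (cases m) (auto simp: le_less)
  then show ?case
  proof cases
    case 1
    then show ?thesis
      using x by (simp add: qbinom_0_right)
  next
    case (2 j)
    have "esym ?w {1..Suc d} m
        = q powi ((Suc j) * (Suc j - 2 * int d)) * qbinom d (Suc j) (q\<^sup>2)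
          + ?w (Suc d) * (q powi (j * (j - 2 * int d)) * qbinom d j (q\<^sup>2))"
      using 2 insert[of j] Suc.IH[of j] Suc.IH[of "Suc j"] by simp
    also have "\<dots> = q powi (int (Suc j) * (int j - 1 - 2 * int d))
          * ((q\<^sup>2) ^ Suc j * qbinom d (Suc j) (q\<^sup>2) + qbinom d j (q\<^sup>2))"
      unfolding distrib_left square_power by (simp add: exp[symmetric] algebra_simps)
    also have "\<dots> = q powi (int m * (int m - 2 * int (Suc d))) * qbinom (Suc d) m (q\<^sup>2)"
      using 2 by (simp add: qbinom_Suc_Suc[OF x] algebra_simps)
    finally show ?thesis .
  next
    case 3
    have "esym ?w {1..d} (Suc d) = 0"
      by (simp add: esym_eq_0_if_card_less)
    then have "esym ?w {1..Suc d} m = ?w (Suc d) * q powi (int d * (int d - 2 * int d))"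
      using 3 insert[of d] Suc.IH[of d] x by (simp add: qbinom_self)
    also have "\<dots> = q powi (int m * (int m - 2 * int (Suc d)))"
      unfolding 3 by (simp add: exp[symmetric] algebra_simps)
    finally show ?thesis
      using 3 x by (simp add: qbinom_self)
  qed
qed

lemma bij_betw_card_greater_eq:
  fixes D :: "'a::linorder set"
  assumes "finite D"
  shows "bij_betw (\<lambda>j. card {i \<in> D. j \<le> i}) D {1..card D}"
proof -
  let ?r = "\<lambda>j. card {i \<in> D. j \<le> i}"
  have inj: "inj_on ?r D"
  proof (rule linorder_inj_onI')
    fix a b
    assume "a \<in> D" "b \<in> D" "a < b"
    then have "{i \<in> D. b \<le> i} \<subseteq> {i \<in> D. a \<le> i}" and "a \<notin> {i \<in> D. b \<le> i}"
      by auto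
    then have "{i \<in> D. b \<le> i} \<subset> {i \<in> D. a \<le> i}"
      using \<open>a \<in> D\<close> by blast
    then have "?r b < ?r a"
      using \<open>finite D\<close> by (intro psubset_card_mono) auto
    then show "?r a \<noteq> ?r b"
      by simp
  qed
  have "?r ` D \<subseteq> {1..card D}"
    using \<open>finite D\<close> by (auto simp: Suc_le_eq card_gt_0_iff intro: card_mono)
  moreover have "card (?r ` D) = card {1..card D}"
    using card_image[OF inj] by simp
  ultimately have "?r ` D = {1..card D}"
    by (intro card_subset_eq) auto
  then show ?thesis
    using inj by (simp add: bij_betw_def)
qed

lemma finite_signed_perms: "finite (signed_perms n)"
proof -
  have "signed_perms n \<subseteq> {f. \<forall>x. (x \<in> {1..n} \<longrightarrow> f x \<in> {-int n..int n}) \<and> (x \<notin> {1..n} \<longrightarrow> f x = 0)}"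
  proof safe
    fix p x
    assume "p \<in> signed_perms n" and "x \<in> {1..n}"
    then have "nat \<bar>p x\<bar> \<in> {1..n}"
      unfolding signed_perms_def using bij_betwE by blast
    then show "p x \<in> {-int n..int n}"
      by auto
  next
    fix p x
    assume "p \<in> signed_perms n" and "x \<notin> {1..n}"
    then show "p x = 0"
      unfolding signed_perms_def by auto
  qed
  then show ?thesis
    by (rule finite_subset) (intro finite_set_of_finite_funs, auto)
qed

lemma DesB_subset: "DesB n p \<subseteq> {0..<n}"
  by (auto simp: DesB_def)

lemma finite_DesB: "finite (DesB n p)"
  using DesB_subset by (rule finite_subset) simp

lemma desB_le: "desB n p \<le> n"
  unfolding desB_def using card_mono[OF _ DesB_subset, of n p] by simp

lemma power_int_sum:
  fixes q :: "'a::field"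
  assumes "q \<noteq> 0"
  shows "q powi (\<Sum>j\<in>S. f j) = (\<Prod>j\<in>S. q powi f j)"
  by (induction S rule: infinite_finite_induct) (simp_all add: power_int_add assms)

lemma power_int_fmaj_star:
  fixes q :: real
  assumes "q \<noteq> 0" and "S \<subseteq> DesB n p"
  shows "q powi fmaj_star n p S
    = q ^ fmaj n p * (\<Prod>j\<in>S. q powi (1 - 2 * int (card {i \<in> DesB n p. j \<le> i})))"
proof -
  have "DesB n p \<inter> {j..n - 1} = {i \<in> DesB n p. j \<le> i}" for j
    using DesB_subset[of n p] by auto
  then have "fmaj_star n p S = int (fmaj n p) + (\<Sum>j\<in>S. 1 - 2 * int (card {i \<in> DesB n p. j \<le> i}))"
    by (simp add: fmaj_star_def sum_negf[symmetric])
  then show ?thesis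
    using assms by (simp add: power_int_add power_int_sum)
qed

lemma sum_starred_descents:
  fixes q :: real
  assumes "q \<noteq> 0"
  shows "(\<Sum>S\<in>{S. S \<subseteq> DesB n p \<and> card S = m}. q powi fmaj_star n p S)
    = q ^ fmaj n p * esym (\<lambda>t. q powi (1 - 2 * int t)) {1..desB n p} m"
proof -
  let ?w = "\<lambda>t. q powi (1 - 2 * int t)" and ?r = "\<lambda>j. card {i \<in> DesB n p. j \<le> i}"
  have "(\<Sum>S\<in>{S. S \<subseteq> DesB n p \<and> card S = m}. q powi fmaj_star n p S)
      = q ^ fmaj n p * esym (?w \<circ> ?r) (DesB n p) m"
    using assms by (simp add: esym_def power_int_fmaj_star sum_distrib_left)
  also have "esym (?w \<circ> ?r) (DesB n p) m = esym ?w {1..desB n p} m"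
    unfolding desB_def by (intro esym_reindex bij_betw_card_greater_eq finite_DesB)
  finally show ?thesis .
qed

lemma sum_signed_perms_by_desB:
  "(\<Sum>p\<in>signed_perms n. q ^ fmaj n p * f (desB n p)) = (\<Sum>d\<le>n. f d * Bpoly n d q)"
proof -
  have "(\<Sum>p\<in>signed_perms n. q ^ fmaj n p * f (desB n p))
      = (\<Sum>d\<le>n. \<Sum>p\<in>{p \<in> signed_perms n. desB n p = d}. q ^ fmaj n p * f (desB n p))"
    using desB_le finite_signed_perms by (intro sum.group[symmetric]) auto
  also have "\<dots> = (\<Sum>d\<le>n. f d * Bpoly n d q)"
    by (intro sum.cong refl) (simp add: Bpoly_def sum_distrib_left mult.commute)
  finally show ?thesis .
qed

lemma Bfmaj_eq_sum_Bpoly: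
  fixes q :: real
  assumes "q \<noteq> 0"
  shows "Bfmaj n m q
    = (\<Sum>d=m..n. q powi (int m * (int m - 2 * int d)) * qbinom d m (q\<^sup>2) * Bpoly n d q)"
proof -
  let ?e = "\<lambda>d. esym (\<lambda>t. q powi (1 - 2 * int t)) {1..d} m"
  have "starred n m = Sigma (signed_perms n) (\<lambda>p. {S. S \<subseteq> DesB n p \<and> card S = m})"
    by (auto simp: starred_def)
  then have "Bfmaj n m q = (\<Sum>p\<in>signed_perms n. q ^ fmaj n p * ?e (desB n p))"
    unfolding Bfmaj_def
    by (simp add: sum.Sigma[symmetric] finite_signed_perms finite_subsets_card_eq finite_DesB
        sum_starred_descents assms)
  also have "\<dots> = (\<Sum>d\<le>n. ?e d * Bpoly n d q)"
    by (rule sum_signed_perms_by_desB)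
  also have "\<dots> = (\<Sum>d=m..n. ?e d * Bpoly n d q)"
    by (intro sum.mono_neutral_right) (auto simp: esym_eq_0_if_card_less)
  also have "\<dots> = (\<Sum>d=m..n. q powi (int m * (int m - 2 * int d)) * qbinom d m (q\<^sup>2) * Bpoly n d q)"
    using esym_inverse_odd_powers[OF assms] by (intro sum.cong refl) auto
  finally show ?thesis .
qed

theorem proposition2p4:
  fixes n k :: nat and q :: real
  assumes "k \<le> n" and "q \<noteq> 0"
  shows "Bfmaj n (n - k) q =
    (\<Sum>l=0..k. q powi (int (n - k) * (2 * int l - int n - int k))
                 * Bpoly n (n - l) q * qbinom (n - l) (k - l) (q\<^sup>2))"
proof -
  have "Bfmaj n (n - k) q = (\<Sum>d=n-k..n.
      q powi (int (n - k) * (int (n - k) - 2 * int d)) * qbinom d (n - k) (q\<^sup>2) * Bpoly n d q)"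
    using \<open>q \<noteq> 0\<close> by (rule Bfmaj_eq_sum_Bpoly)
  also have "\<dots> = (\<Sum>l=0..k. q powi (int (n - k) * (int (n - k) - 2 * int (n - l)))
      * qbinom (n - l) (n - k) (q\<^sup>2) * Bpoly n (n - l) q)"
    using \<open>k \<le> n\<close> by (intro sum.reindex_bij_witness[of _ "\<lambda>d. n - d" "\<lambda>l. n - l"]) auto
  also have "\<dots> = (\<Sum>l=0..k. q powi (int (n - k) * (2 * int l - int n - int k))
      * Bpoly n (n - l) q * qbinom (n - l) (k - l) (q\<^sup>2))"
    using \<open>k \<le> n\<close> qbinom_symmetric[of "n - k" "n - l" "q\<^sup>2" for l]
    by (intro sum.cong refl) (auto simp: of_nat_diff algebra_simps)
  finally show ?thesis .
qed

end
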